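(* Let $k$ be a positive integer, $p\in(0,1)$, $z\ge 1$ an integer, and let $(x_1,\dots,x_k)$, $(y_1,\dots,y_k)$ be sequences of nonnegative integers such that $(x_1,\dots,x_k)$ is a permutation of $(y_1,\dots,y_k)$ and $S_{i_1,\dots,i_m}(x)=S_{i_1,\dots,i_m}(y)$ for all $1\le m\le z$ and all indices $i_1,\dots,i_m$. Let $x^*=\max\{x_1,\dots,x_k\}$, and let $x=10^{n+x_1}10^{n+x_2}\cdots10^{n+x_k}$ and $y=10^{n+y_1}\cdots10^{n+y_k}$. Let $C>0$ and let $a=10^{a_1}10^{a_2}\cdots10^{a_k}$ with nonnegative integers $a_j$ satisfying $a_j-n(1-p)\in[-C\sqrt{n\log n},C\sqrt{n\log n}]$ for all $j\in[k]$. Then for sufficiently large $n$ and $c$ (depending on $C,k,p,x^*$), $$\frac{\Pr_{\tilde{x}\sim\mathrm{Del}(x)}[\tilde{x}=a]}{\Pr_{\tilde{y}\sim\mathrm{Del}(y)}[\tilde{y}=a]}\in\left[1-(c\log n/n)^{\frac{z+1}{2}},\,1+(c\log n/n)^{\frac{z+1}{2}}\right].$$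
   Context: $0^t$ denotes $t$ consecutive zeros. For an integer sequence $x=(x_1,\dots,x_k)$ (indices mod $k$), the cyclic statistic of order $m$ is $S_{i_1,\dots,i_m}(x)=\sum_{j=1}^k x_{i_1+j}\cdots x_{i_m+j}$. The circular deletion channel $\mathrm{Del}(w)$ with deletion probability $p$ deletes each bit of $w$ independently with probability $p$ and returns a uniformly random cyclic shift of the result. *)

theory Defs
  imports "HOL-Analysis.Analysis"
begin

definition cyc_stat :: "nat list \<Rightarrow> nat list \<Rightarrow> nat" where
  "cyc_stat x is = (\<Sum>j<length x. prod_list (map (\<lambda>i. x ! ((i + j) mod length x)) is))"

text \<open>Binary strings as bool lists (True = 1, False = 0).
  blocks [b1,...,bk] = 1 0^{b1} 1 0^{b2} ... 1 0^{bk}.\<close>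
definition blocks :: "nat list \<Rightarrow> bool list" where
  "blocks bs = concat (map (\<lambda>b. True # replicate b False) bs)"

definition cyc_shift_prob :: "bool list \<Rightarrow> bool list \<Rightarrow> real" where
  "cyc_shift_prob v u =
     (if v = [] then (if u = [] then 1 else 0)
      else real (card {s. s < length v \<and> rotate s v = u}) / real (length v))"

text \<open>Circular deletion channel Del(w): each bit deleted independently with probability p
  (K = set of kept positions), then a uniformly random cyclic shift of the result.
  del_prob p w u = Pr[Del(w) = u].\<close>
definition del_prob :: "real \<Rightarrow> bool list \<Rightarrow> bool list \<Rightarrow> real" where
  "del_prob p w u =
     (\<Sum>K\<in>Pow {0..<length w}.
        p ^ (length w - card K) * (1 - p) ^ card K * cyc_shift_prob (nths w K) u)"

end

theory Submission
  imports Defs "HOL-Computational_Algebra.Polynomial"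
begin

text \<open>
  The received string \<open>a = 1 0^a\<^sub>1 ... 1 0^a\<^sub>k\<close> has as many ones as the input, so every
  one must survive: the input \<open>1 0^(n+x\<^sub>1) ... 1 0^(n+x\<^sub>k)\<close> can only produce the rotations
  of \<open>a\<close> starting at a one, each run \<open>0^(n+x\<^sub>j)\<close> being thinned independently to the
  matching run of \<open>a\<close>. Hence, up to a factor not depending on \<open>x\<close>, the output probability is
  the cyclic sum \<open>\<Sum>r. \<Prod>i. R\<^sub>a\<^sub>i (x\<^sub>i\<^sub>+\<^sub>r)\<close>, where \<open>R\<^sub>a m = B (n + m) a / B n a\<close> and
  \<open>B b c\<close> is the probability that exactly \<open>c\<close> of \<open>b\<close> zeros survive.

  Put \<open>e = sqrt (ln n / n)\<close>. For \<open>a\<close> within \<open>C sqrt (n ln n)\<close> of \<open>n (1 - p)\<close>, the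
  \<open>j\<close>-th forward difference of \<open>R\<^sub>a\<close> is \<open>O(e^j)\<close>, so on a fixed range \<open>{0..X}\<close> it is a
  polynomial whose \<open>j\<close>-th coefficient is \<open>O(e^j)\<close>. Multiplying out, the cyclic sum becomes a
  combination of cyclic statistics of \<open>x\<close> in which those of order \<open>m\<close> carry weight
  \<open>O(e^m)\<close>. Statistics of order at most \<open>z\<close> agree for \<open>x\<close> and \<open>y\<close> and both sums are
  close to \<open>k\<close>, so the ratio is \<open>1 + O(e^(z+1))\<close>.
\<close>

section \<open>Forward differences and polynomial interpolation\<close>

definition fwd_diff :: "(nat \<Rightarrow> real) \<Rightarrow> nat \<Rightarrow> real" where
  "fwd_diff f m = f (Suc m) - f m"

lemma fwd_diff_iter_Suc: "(fwd_diff ^^ Suc i) f = (fwd_diff ^^ i) (fwd_diff f)"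
  by (simp add: funpow_Suc_right del: funpow.simps)

lemma fwd_diff_iter_Suc_apply:
  "(fwd_diff ^^ Suc i) f m = (fwd_diff ^^ i) f (Suc m) - (fwd_diff ^^ i) f m"
  by (simp add: fwd_diff_def)

lemma fwd_diff_iter_shift: "(fwd_diff ^^ i) (\<lambda>m. f (Suc m)) m = (fwd_diff ^^ i) f (Suc m)"
  by (induction i arbitrary: m) (simp_all add: fwd_diff_iter_Suc_apply del: funpow.simps)

lemma fwd_diff_iter_add: "(fwd_diff ^^ i) (\<lambda>m. f m + g m) m = (fwd_diff ^^ i) f m + (fwd_diff ^^ i) g m"
  by (induction i arbitrary: m) (simp_all add: fwd_diff_iter_Suc_apply del: funpow.simps)

lemma fwd_diff_iter_affine:
  assumes "0 < i"
  shows "(fwd_diff ^^ i) (\<lambda>m. a + b * f m) m = b * (fwd_diff ^^ i) f m"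
  using assms
proof (induction i arbitrary: m rule: nat_induct_non_zero)
  case 1
  then show ?case by (simp add: fwd_diff_def algebra_simps)
next
  case (Suc i)
  then show ?case by (simp add: fwd_diff_iter_Suc_apply algebra_simps del: funpow.simps)
qed

lemma fwd_diff_mult:
  "fwd_diff (\<lambda>m. f m * g m) = (\<lambda>m. f (Suc m) * fwd_diff g m + fwd_diff f m * g m)"
  by (auto simp: fwd_diff_def algebra_simps)

lemma fwd_diff_iter_recip:
  fixes D :: real
  assumes "D > 0"
  shows "(fwd_diff ^^ i) (\<lambda>m. 1 / (D + m)) m = (- 1) ^ i * fact i / (\<Prod>j\<le>i. D + real m + real j)"
proof (induction i arbitrary: m)
  case 0
  then show ?case by (simp add: atMost_0)
next
  case (Suc i)
  define A where "A = (\<Prod>j\<le>i. D + real (Suc m) + real j)"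
  define B where "B = (\<Prod>j\<le>i. D + real m + real j)"
  define T where "T = (\<Prod>j\<le>Suc i. D + real m + real j)"
  have pos: "A > 0" "B > 0" "D + m > 0" "D + m + Suc i > 0"
    unfolding A_def B_def using assms by (auto intro: prod_pos)
  have "T = (D + m) * A"
    unfolding T_def A_def prod.atMost_Suc_shift by (simp add: ac_simps)
  then have "1 / A = (D + m) / T"
    using pos by simp
  moreover have "T = B * (D + m + Suc i)"
    unfolding T_def B_def by simp
  then have "1 / B = (D + m + Suc i) / T"
    using pos by simp
  ultimately have "1 / A - 1 / B = - real (Suc i) / T"
    by (simp add: diff_divide_distrib[symmetric])
  have "(fwd_diff ^^ Suc i) (\<lambda>m. 1 / (D + m)) m = (- 1) ^ i * fact i * (1 / A - 1 / B)"
    using Suc by (simp add: fwd_diff_iter_Suc_apply A_def B_def right_diff_distrib del: funpow.simps)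
  also have "\<dots> = (- 1) ^ Suc i * fact (Suc i) / T"
    unfolding \<open>1 / A - 1 / B = - real (Suc i) / T\<close> by (simp add: algebra_simps)
  finally show ?case
    by (simp add: T_def)
qed

lemma newton_forward_diff: "f m = (\<Sum>d\<le>m. real (m choose d) * (fwd_diff ^^ d) f 0)"
proof (induction m arbitrary: f)
  case 0
  then show ?case by simp
next
  case (Suc m)
  define F where "F d = (fwd_diff ^^ d) f 0" for d
  have F_Suc: "(fwd_diff ^^ d) (fwd_diff f) 0 = F (Suc d)" for d
    unfolding F_def by (simp only: fwd_diff_iter_Suc)
  have "f (Suc m) = f m + fwd_diff f m"
    by (simp add: fwd_diff_def)
  also have "\<dots> = (\<Sum>d\<le>m. real (m choose d) * F d) + (\<Sum>d\<le>m. real (m choose d) * F (Suc d))"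
    using Suc[of f] Suc[of "fwd_diff f"] by (simp add: F_Suc F_def)
  also have "(\<Sum>d\<le>m. real (m choose d) * F d) = (\<Sum>d\<le>Suc m. real (m choose d) * F d)"
    by simp
  also have "\<dots> = F 0 + (\<Sum>d\<le>m. real (m choose Suc d) * F (Suc d))"
    by (subst sum.atMost_Suc_shift) simp
  also have "F 0 + (\<Sum>d\<le>m. real (m choose Suc d) * F (Suc d)) + (\<Sum>d\<le>m. real (m choose d) * F (Suc d))
      = F 0 + (\<Sum>d\<le>m. real (Suc m choose Suc d) * F (Suc d))"
    by (simp add: sum.distrib[symmetric] algebra_simps)
  also have "\<dots> = (\<Sum>d\<le>Suc m. real (Suc m choose d) * F d)"
    by (subst sum.atMost_Suc_shift) simp
  finally show ?case
    by (simp add: F_def)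
qed

definition binomial_poly :: "nat \<Rightarrow> real poly" where
  "binomial_poly d = smult (1 / fact d) (\<Prod>i<d. [:- of_nat i, 1:])"

lemma poly_binomial_poly: "poly (binomial_poly d) (real m) = real (m choose d)"
  unfolding binomial_poly_def binomial_gbinomial gbinomial_prod_rev
  by (simp add: poly_prod divide_inverse mult.commute atLeast0LessThan)

lemma degree_binomial_poly: "degree (binomial_poly d) \<le> d"
proof -
  have "degree (\<Prod>i<d. [:- of_nat i, 1::real:]) \<le> (\<Sum>i<d. degree [:- of_nat i, 1::real:])"
    using degree_prod_sum_le[of "{..<d}" "\<lambda>i. [:- of_nat i, 1::real:]"] by (simp add: o_def)
  then show ?thesis
    by (simp add: binomial_poly_def)
qed

definition diffs_bounded :: "nat \<Rightarrow> real \<Rightarrow> real \<Rightarrow> nat \<Rightarrow> (nat \<Rightarrow> real) \<Rightarrow> bool" where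
  "diffs_bounded Y K e q f \<longleftrightarrow> (\<forall>i m. m + i \<le> Y \<longrightarrow> \<bar>(fwd_diff ^^ i) f m\<bar> \<le> K * e ^ (i + q))"

lemma diffs_bounded_0_iff: "diffs_bounded 0 K e q f \<longleftrightarrow> \<bar>f 0\<bar> \<le> K * e ^ q"
  by (simp add: diffs_bounded_def)

lemma diffs_bounded_abs_le: "diffs_bounded Y K e q f \<Longrightarrow> m \<le> Y \<Longrightarrow> \<bar>f m\<bar> \<le> K * e ^ q"
  unfolding diffs_bounded_def by (metis add_0 add_0_right funpow_0)

lemma diffs_bounded_Suc_iff:
  "diffs_bounded (Suc Y) K e q f \<longleftrightarrow>
     (\<forall>m\<le>Suc Y. \<bar>f m\<bar> \<le> K * e ^ q) \<and> diffs_bounded Y K e (Suc q) (fwd_diff f)"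
  unfolding diffs_bounded_def
proof safe
  fix i m
  assume "\<forall>i m. m + i \<le> Suc Y \<longrightarrow> \<bar>(fwd_diff ^^ i) f m\<bar> \<le> K * e ^ (i + q)" "m + i \<le> Y"
  then show "\<bar>(fwd_diff ^^ i) (fwd_diff f) m\<bar> \<le> K * e ^ (i + Suc q)"
    by (metis add_Suc_right add_Suc fwd_diff_iter_Suc Suc_le_mono)
next
  fix i m
  assume "\<forall>m\<le>Suc Y. \<bar>f m\<bar> \<le> K * e ^ q"
    and "\<forall>i m. m + i \<le> Y \<longrightarrow> \<bar>(fwd_diff ^^ i) (fwd_diff f) m\<bar> \<le> K * e ^ (i + Suc q)"
    and "m + i \<le> Suc Y"
  then show "\<bar>(fwd_diff ^^ i) f m\<bar> \<le> K * e ^ (i + q)"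
    by (cases i) (auto simp: fwd_diff_iter_Suc simp del: funpow.simps)
next
  fix m
  assume "\<forall>i m. m + i \<le> Suc Y \<longrightarrow> \<bar>(fwd_diff ^^ i) f m\<bar> \<le> K * e ^ (i + q)" "m \<le> Suc Y"
  then show "\<bar>f m\<bar> \<le> K * e ^ q"
    by (metis add_0 add_0_right funpow_0)
qed

lemma diffs_bounded_mono:
  assumes "diffs_bounded Y K e q f" "Y' \<le> Y" "K \<le> K'" "0 \<le> e"
  shows "diffs_bounded Y' K' e q f"
  using assms unfolding diffs_bounded_def
  by (meson order_trans mult_right_mono zero_le_power le_trans add_le_mono order_refl)

lemma diffs_bounded_shift:
  "diffs_bounded (Suc Y) K e q f \<Longrightarrow> diffs_bounded Y K e q (\<lambda>m. f (Suc m))"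
  unfolding diffs_bounded_def fwd_diff_iter_shift by auto

lemma diffs_bounded_add:
  assumes "diffs_bounded Y K1 e q f" "diffs_bounded Y K2 e q g"
  shows "diffs_bounded Y (K1 + K2) e q (\<lambda>m. f m + g m)"
  using assms unfolding diffs_bounded_def fwd_diff_iter_add
  by (smt (verit, best) distrib_right)

text \<open>Each order of difference doubles the constant: the discrete Leibniz rule
  \<open>fwd_diff_mult\<close> splits a product into two terms.\<close>
lemma diffs_bounded_mult:
  assumes "diffs_bounded Y K1 e q1 f" "diffs_bounded Y K2 e q2 g" "0 \<le> K1" "0 \<le> K2" "0 \<le> e"
  shows "diffs_bounded Y (2 ^ Y * K1 * K2) e (q1 + q2) (\<lambda>m. f m * g m)"
  using assms(1,2)
proof (induction Y arbitrary: f g q1 q2)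
  case 0
  then have "\<bar>f 0\<bar> * \<bar>g 0\<bar> \<le> (K1 * e ^ q1) * (K2 * e ^ q2)"
    using assms(3-5) by (intro mult_mono) (auto simp: diffs_bounded_0_iff)
  then show ?case
    by (simp add: diffs_bounded_0_iff abs_mult power_add mult_ac)
next
  case (Suc Y)
  have f: "\<forall>m\<le>Suc Y. \<bar>f m\<bar> \<le> K1 * e ^ q1" "diffs_bounded Y K1 e (Suc q1) (fwd_diff f)"
    and g: "\<forall>m\<le>Suc Y. \<bar>g m\<bar> \<le> K2 * e ^ q2" "diffs_bounded Y K2 e (Suc q2) (fwd_diff g)"
    using Suc.prems by (simp_all add: diffs_bounded_Suc_iff)
  have "\<bar>f m * g m\<bar> \<le> 2 ^ Suc Y * K1 * K2 * e ^ (q1 + q2)" if "m \<le> Suc Y" for m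
  proof -
    have "\<bar>f m\<bar> * \<bar>g m\<bar> \<le> (K1 * e ^ q1) * (K2 * e ^ q2)"
      using f g that assms(3-5) by (intro mult_mono) auto
    also have "\<dots> \<le> 2 ^ Suc Y * ((K1 * e ^ q1) * (K2 * e ^ q2))"
      using mult_right_mono[OF one_le_power[of "2::real" "Suc Y"], of "(K1 * e ^ q1) * (K2 * e ^ q2)"]
        assms(3-5) by simp
    finally show ?thesis
      by (simp add: abs_mult power_add mult_ac)
  qed
  moreover have "diffs_bounded Y (2 ^ Y * K1 * K2 + 2 ^ Y * K1 * K2) e (Suc (q1 + q2))
      (\<lambda>m. f (Suc m) * fwd_diff g m + fwd_diff f m * g m)"
  proof (rule diffs_bounded_add)
    show "diffs_bounded Y (2 ^ Y * K1 * K2) e (Suc (q1 + q2)) (\<lambda>m. f (Suc m) * fwd_diff g m)"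
      using Suc.IH[OF diffs_bounded_shift[OF Suc.prems(1)] g(2)] by simp
    show "diffs_bounded Y (2 ^ Y * K1 * K2) e (Suc (q1 + q2)) (\<lambda>m. fwd_diff f m * g m)"
      using Suc.IH[OF f(2) diffs_bounded_mono[OF Suc.prems(2)]] assms(5) by simp
  qed
  moreover have "2 ^ Y * K1 * K2 + 2 ^ Y * K1 * K2 = (2 ^ Suc Y * K1 * K2 :: real)"
    by simp
  ultimately show ?case
    by (simp add: diffs_bounded_Suc_iff fwd_diff_mult)
qed

definition poly_rep :: "nat \<Rightarrow> real \<Rightarrow> real \<Rightarrow> (nat \<Rightarrow> real) \<Rightarrow> (nat \<Rightarrow> real) \<Rightarrow> bool" where
  "poly_rep X K e c f \<longleftrightarrow> (\<forall>m\<le>X. f m = (\<Sum>j\<le>X. c j * real m ^ j)) \<and> (\<forall>j. \<bar>c j\<bar> \<le> K * e ^ j)"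

definition binomial_poly_coeff_sum :: "nat \<Rightarrow> real" where
  "binomial_poly_coeff_sum X = (\<Sum>d\<le>X. \<Sum>j\<le>X. \<bar>coeff (binomial_poly d) j\<bar>)"

definition newton_coeff :: "nat \<Rightarrow> (nat \<Rightarrow> real) \<Rightarrow> nat \<Rightarrow> real" where
  "newton_coeff X f j = (\<Sum>d\<le>X. (fwd_diff ^^ d) f 0 * coeff (binomial_poly d) j)"

lemma coeff_binomial_poly_eq_0: "d < j \<Longrightarrow> coeff (binomial_poly d) j = 0"
  using degree_binomial_poly[of d] by (intro coeff_eq_0) simp

lemma newton_coeff_expansion:
  assumes "m \<le> X"
  shows "f m = (\<Sum>j\<le>X. newton_coeff X f j * real m ^ j)"
proof -
  have "f m = (\<Sum>d\<le>X. real (m choose d) * (fwd_diff ^^ d) f 0)"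
    by (subst newton_forward_diff) (rule sum.mono_neutral_left, use assms in auto)
  also have "\<dots> = (\<Sum>d\<le>X. \<Sum>j\<le>X. (fwd_diff ^^ d) f 0 * coeff (binomial_poly d) j * real m ^ j)"
  proof (rule sum.cong [OF refl])
    fix d assume "d \<in> {..X}"
    then have "poly (binomial_poly d) (real m) = (\<Sum>j\<le>X. coeff (binomial_poly d) j * real m ^ j)"
      unfolding poly_altdef using degree_binomial_poly[of d]
      by (intro sum.mono_neutral_left) (auto simp: coeff_binomial_poly_eq_0 intro: le_degree)
    then show "real (m choose d) * (fwd_diff ^^ d) f 0
        = (\<Sum>j\<le>X. (fwd_diff ^^ d) f 0 * coeff (binomial_poly d) j * real m ^ j)"
      by (simp add: poly_binomial_poly sum_distrib_left mult_ac)
  qed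
  also have "\<dots> = (\<Sum>j\<le>X. newton_coeff X f j * real m ^ j)"
    unfolding newton_coeff_def by (subst sum.swap) (simp add: sum_distrib_right)
  finally show ?thesis .
qed

text \<open>The coefficient of \<open>m ^ j\<close> only involves differences of order at least \<open>j\<close>.\<close>
lemma abs_newton_coeff_le:
  assumes f: "diffs_bounded X K e 0 f" and e: "0 \<le> e" "e \<le> 1" and K: "0 \<le> K"
  shows "\<bar>newton_coeff X f j\<bar> \<le> K * binomial_poly_coeff_sum X * e ^ j"
proof -
  have "\<bar>(fwd_diff ^^ d) f 0 * coeff (binomial_poly d) j\<bar> \<le> K * e ^ j * \<bar>coeff (binomial_poly d) j\<bar>"
    if "d \<le> X" for d
  proof (cases "j \<le> d")
    case True
    have "\<bar>(fwd_diff ^^ d) f 0\<bar> \<le> K * e ^ d"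
      using f that by (simp add: diffs_bounded_def)
    also have "\<dots> \<le> K * e ^ j"
      using True e K by (intro mult_left_mono power_decreasing) auto
    finally show ?thesis
      by (simp add: abs_mult mult_right_mono)
  qed (simp add: coeff_binomial_poly_eq_0)
  then have "\<bar>newton_coeff X f j\<bar> \<le> K * e ^ j * (\<Sum>d\<le>X. \<bar>coeff (binomial_poly d) j\<bar>)"
    unfolding newton_coeff_def sum_distrib_left by (intro order_trans[OF sum_abs] sum_mono) auto
  also have "\<dots> \<le> K * e ^ j * binomial_poly_coeff_sum X"
  proof (intro mult_left_mono)
    show "(\<Sum>d\<le>X. \<bar>coeff (binomial_poly d) j\<bar>) \<le> binomial_poly_coeff_sum X"
    proof (cases "j \<le> X")
      case True
      then show ?thesis
        unfolding binomial_poly_coeff_sum_def by (intro sum_mono member_le_sum) auto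
    next
      case False
      then show ?thesis
        by (simp add: binomial_poly_coeff_sum_def coeff_binomial_poly_eq_0 sum_nonneg)
    qed
  qed (use K e in simp)
  finally show ?thesis
    by (simp add: mult_ac)
qed

lemma poly_rep_if_diffs_bounded:
  "diffs_bounded X K e 0 f \<Longrightarrow> 0 \<le> e \<Longrightarrow> e \<le> 1 \<Longrightarrow> 0 \<le> K
    \<Longrightarrow> poly_rep X (K * binomial_poly_coeff_sum X) e (newton_coeff X f) f"
  unfolding poly_rep_def using newton_coeff_expansion abs_newton_coeff_le by blast

section \<open>Ratios of binomial probabilities\<close>

definition binom_mass :: "real \<Rightarrow> nat \<Rightarrow> nat \<Rightarrow> real" where
  "binom_mass p b c = real (b choose c) * p ^ (b - c) * (1 - p) ^ c"

lemma binom_mass_pos: "c \<le> b \<Longrightarrow> 0 < p \<Longrightarrow> p < 1 \<Longrightarrow> 0 < binom_mass p b c"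
  by (simp add: binom_mass_def)

lemma binom_mass_Suc:
  assumes "c \<le> b"
  shows "binom_mass p (Suc b) c = binom_mass p b c * (p * (real b + 1) / (real b + 1 - real c))"
proof -
  have "real (Suc b - c) * real (Suc b choose c) = real (Suc b) * real (b choose c)"
    using binomial_absorb_comp[of "Suc b" c] by (metis diff_Suc_1 of_nat_mult)
  moreover have "real (Suc b - c) = real b + 1 - real c" "real b + 1 - real c > 0"
    using assms by (simp_all add: of_nat_diff)
  ultimately have "real (Suc b choose c) = real (Suc b) * real (b choose c) / (real b + 1 - real c)"
    by (simp add: field_simps)
  moreover have "p ^ (Suc b - c) = p * p ^ (b - c)"
    using assms by (simp add: Suc_diff_le)
  ultimately show ?thesis
    by (simp add: binom_mass_def)
qed

lemma binom_mass_Suc_Suc: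
  "binom_mass p (Suc b) (Suc c) = p * binom_mass p b (Suc c) + (1 - p) * binom_mass p b c"
proof (cases "c < b")
  case True
  then have "p ^ (b - c) = p * p ^ (b - Suc c)"
    by (metis Suc_diff_Suc power_Suc)
  then show ?thesis
    unfolding binom_mass_def using True by (simp add: algebra_simps)
next
  case False
  then show ?thesis
    by (cases "c = b") (simp_all add: binom_mass_def binomial_eq_0)
qed

definition binom_ratio :: "real \<Rightarrow> nat \<Rightarrow> nat \<Rightarrow> nat \<Rightarrow> real" where
  "binom_ratio p n a m = binom_mass p (n + m) a / binom_mass p n a"

definition ratio_step :: "real \<Rightarrow> nat \<Rightarrow> nat \<Rightarrow> nat \<Rightarrow> real" where
  "ratio_step p n a m = p * (real n + real m + 1) / (real n - real a + real m + 1) - 1"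

lemma binom_ratio_0: "a \<le> n \<Longrightarrow> 0 < p \<Longrightarrow> p < 1 \<Longrightarrow> binom_ratio p n a 0 = 1"
  using binom_mass_pos[of a n p] by (simp add: binom_ratio_def)

lemma binom_ratio_Suc:
  assumes "a \<le> n"
  shows "binom_ratio p n a (Suc m) = binom_ratio p n a m * (1 + ratio_step p n a m)"
  using binom_mass_Suc[of a "n + m" p] assms
  by (simp add: binom_ratio_def ratio_step_def algebra_simps)

lemma fwd_diff_binom_ratio:
  "a \<le> n \<Longrightarrow> fwd_diff (binom_ratio p n a) = (\<lambda>m. binom_ratio p n a m * ratio_step p n a m)"
  by (rule ext) (simp add: fwd_diff_def binom_ratio_Suc algebra_simps)

lemma abs_binom_ratio_le:
  assumes "a \<le> n" "0 < p" "p < 1" "\<forall>l<m. \<bar>ratio_step p n a l\<bar> \<le> K"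
  shows "\<bar>binom_ratio p n a m\<bar> \<le> (1 + K) ^ m"
  using assms(4)
proof (induction m)
  case 0
  then show ?case
    using assms by (simp add: binom_ratio_0)
next
  case (Suc m)
  have "\<bar>binom_ratio p n a (Suc m)\<bar> = \<bar>binom_ratio p n a m\<bar> * \<bar>1 + ratio_step p n a m\<bar>"
    using assms(1) by (simp add: binom_ratio_Suc abs_mult)
  also have "\<dots> \<le> (1 + K) ^ m * (1 + K)"
    using Suc by (intro mult_mono) auto
  finally show ?case
    by (simp add: mult.commute)
qed

text \<open>With \<open>D = n - a + 1\<close> one has \<open>ratio_step p n a m = (p - 1) + p a / (D + m)\<close>.\<close>
lemma fwd_diff_iter_ratio_step:
  assumes "a \<le> n" "0 < i"
  shows "(fwd_diff ^^ i) (ratio_step p n a) m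
    = p * a * ((- 1) ^ i * fact i / (\<Prod>j\<le>i. (real n - real a + 1) + real m + real j))"
proof -
  define D where "D = real n - real a + 1"
  have D: "D > 0"
    using assms(1) by (simp add: D_def)
  have step: "ratio_step p n a = (\<lambda>m. (p - 1) + p * a * (1 / (D + m)))"
  proof
    fix m :: nat
    have "D + m > 0"
      using D by simp
    then show "ratio_step p n a m = (p - 1) + p * a * (1 / (D + m))"
      by (simp add: ratio_step_def D_def field_simps)
  qed
  have "(fwd_diff ^^ i) (ratio_step p n a) m = p * a * (fwd_diff ^^ i) (\<lambda>m. 1 / (D + m)) m"
    unfolding step by (rule fwd_diff_iter_affine[OF assms(2)])
  also have "\<dots> = p * a * ((- 1) ^ i * fact i / (\<Prod>j\<le>i. D + real m + real j))"
    by (simp only: fwd_diff_iter_recip[OF D])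
  finally show ?thesis
    by (simp only: D_def)
qed

text \<open>The window of the theorem: \<open>e\<close> stands for \<open>sqrt (ln n / n)\<close>, so that
  \<open>C * sqrt (n * ln n) = C * n * e\<close>.\<close>
definition typical :: "real \<Rightarrow> real \<Rightarrow> nat \<Rightarrow> nat \<Rightarrow> real \<Rightarrow> bool" where
  "typical p C n a e \<longleftrightarrow> 0 < n \<and> 0 \<le> e \<and> e \<le> 1 \<and> 1 / real n \<le> e ^ 2
     \<and> \<bar>real a - real n * (1 - p)\<bar> \<le> C * real n * e \<and> C * e \<le> p / 2"

lemma typical_inv_le: "typical p C n a e \<Longrightarrow> 1 / real n \<le> e"
  unfolding typical_def by (smt (verit) power_le_one_iff power2_eq_square mult_left_le)

lemma typical_gap:
  assumes "typical p C n a e"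
  shows "p * real n / 2 \<le> real n - real a"
proof -
  have "\<bar>real a - real n * (1 - p)\<bar> \<le> C * e * real n"
    using assms unfolding typical_def by (simp add: mult_ac)
  then have "real a - real n * (1 - p) \<le> C * e * real n"
    by (rule abs_le_D1)
  also have "\<dots> \<le> p / 2 * real n"
    using assms unfolding typical_def by (intro mult_right_mono) auto
  finally show ?thesis
    by (simp add: algebra_simps)
qed

lemma typical_le:
  assumes "0 < p" "typical p C n a e"
  shows "a \<le> n"
proof -
  have "0 \<le> p * real n / 2"
    using assms(1) by simp
  then show ?thesis
    using typical_gap[OF assms(2)] by simp
qed

lemma abs_ratio_step_le:
  assumes "0 < p" "p < 1" "typical p C n a e" "m \<le> X"
  shows "\<bar>ratio_step p n a m\<bar> \<le> 2 * (C + X + 1) / p * e"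
proof -
  define D where "D = real n - real a + real m + 1"
  have n: "0 < real n" "1 / real n \<le> e"
    using assms(3) typical_inv_le by (auto simp: typical_def)
  have D: "p * real n / 2 \<le> D" "0 < p * real n / 2"
    using typical_gap[OF assms(3)] assms(1) n by (auto simp: D_def)
  have num: "\<bar>p * (real n + real m + 1) - D\<bar> \<le> C * real n * e + (X + 1)"
  proof -
    have "p * (real n + real m + 1) - D = (real a - real n * (1 - p)) - (1 - p) * (real m + 1)"
      by (simp add: D_def algebra_simps)
    moreover have "0 \<le> (1 - p) * (real m + 1)" "(1 - p) * (real m + 1) \<le> real m + 1"
      using assms(1,2) by (auto intro: mult_left_le_one_le)
    moreover have "real m \<le> X"
      using assms(4) by simp
    ultimately show ?thesis
      using assms(3) unfolding typical_def by linarith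
  qed
  moreover have "ratio_step p n a m = (p * (real n + real m + 1) - D) / D"
    using D by (simp add: ratio_step_def D_def field_simps)
  ultimately have "\<bar>ratio_step p n a m\<bar> = \<bar>p * (real n + real m + 1) - D\<bar> / D"
    using D by simp
  also have "\<dots> \<le> (C * real n * e + (X + 1)) / (p * real n / 2)"
    using D num by (intro frac_le) auto
  also have "\<dots> = 2 * C / p * e + 2 * (X + 1) / p * (1 / real n)"
    using n assms(1) by (simp add: field_simps)
  also have "\<dots> \<le> 2 * C / p * e + 2 * (X + 1) / p * e"
    using n assms(1) by (intro add_left_mono mult_left_mono) auto
  also have "\<dots> = 2 * (C + X + 1) / p * e"
    by (simp add: add_divide_distrib[symmetric] distrib_left distrib_right)
  finally show ?thesis .
qed

lemma abs_fwd_diff_iter_ratio_step_le: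
  assumes "0 < p" "p < 1" "typical p C n a e" "0 < i"
  shows "\<bar>(fwd_diff ^^ i) (ratio_step p n a) m\<bar> \<le> fact i * (2 / p) ^ Suc i * e ^ Suc i"
proof -
  define P where "P = (\<Prod>j\<le>i. (real n - real a + 1) + real m + real j)"
  have n: "0 < real n" "1 / real n \<le> e ^ 2" "0 \<le> e" "e \<le> 1"
    using assms(3) by (auto simp: typical_def)
  have gap: "p * real n / 2 \<le> real n - real a" "0 < p * real n / 2"
    using typical_gap[OF assms(3)] assms(1) n by auto
  have "(p * real n / 2) ^ Suc i = (\<Prod>j\<le>i. p * real n / 2)"
    by simp
  also have "\<dots> \<le> P"
    unfolding P_def using gap by (intro prod_mono) auto
  finally have P: "(p * real n / 2) ^ Suc i \<le> P" .
  have "p * real a \<le> real a"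
    using assms(1,2) by (intro mult_left_le_one_le) auto
  then have "p * real a \<le> real n"
    using typical_le[OF assms(1,3)] by linarith
  have "0 < P"
    unfolding P_def using gap by (intro prod_pos) auto
  have "(fwd_diff ^^ i) (ratio_step p n a) m = p * real a * ((- 1) ^ i * fact i / P)"
    unfolding P_def by (rule fwd_diff_iter_ratio_step[OF typical_le[OF assms(1,3)] assms(4)])
  then have "\<bar>(fwd_diff ^^ i) (ratio_step p n a) m\<bar> = p * real a * fact i / P"
    using \<open>0 < P\<close> assms(1) by (simp add: abs_mult)
  also have "\<dots> \<le> real n * fact i / (p * real n / 2) ^ Suc i"
    using \<open>p * real a \<le> real n\<close> gap P by (intro frac_le mult_right_mono) auto
  also have "\<dots> = fact i * (2 / p) ^ Suc i * (1 / real n) ^ i"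
    using n assms(1) by (simp add: field_simps power_mult_distrib)
  also have "\<dots> \<le> fact i * (2 / p) ^ Suc i * (e ^ 2) ^ i"
    using n assms(1) by (intro mult_left_mono power_mono) auto
  also have "\<dots> \<le> fact i * (2 / p) ^ Suc i * e ^ Suc i"
    unfolding power_mult[symmetric] using n assms(1,4) by (intro mult_left_mono power_decreasing) auto
  finally show ?thesis .
qed

definition ratio_step_bound :: "real \<Rightarrow> real \<Rightarrow> nat \<Rightarrow> real" where
  "ratio_step_bound p C X = 2 * (C + X + 1) / p + fact X * (2 / p) ^ Suc X"

lemma ratio_step_bound_nonneg: "0 < p \<Longrightarrow> 0 \<le> C \<Longrightarrow> 0 \<le> ratio_step_bound p C X"
  by (simp add: ratio_step_bound_def)

lemma ratio_step_diffs_bounded: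
  assumes "0 < p" "p < 1" "0 \<le> C" "typical p C n a e"
  shows "diffs_bounded X (ratio_step_bound p C X) e 1 (ratio_step p n a)"
  unfolding diffs_bounded_def ratio_step_bound_def
proof (intro allI impI)
  fix i m assume im: "m + i \<le> X"
  have e: "0 \<le> e" using assms(4) by (simp add: typical_def)
  have K: "0 \<le> 2 * (C + X + 1) / p" "0 \<le> fact X * (2 / p) ^ Suc X"
    using assms(1,3) by auto
  show "\<bar>(fwd_diff ^^ i) (ratio_step p n a) m\<bar> \<le> (2 * (C + X + 1) / p + fact X * (2 / p) ^ Suc X) * e ^ (i + 1)"
  proof (cases "i = 0")
    case True
    have "2 * (C + X + 1) / p * e \<le> (2 * (C + X + 1) / p + fact X * (2 / p) ^ Suc X) * e"
      using K e by (intro mult_right_mono) auto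
    then show ?thesis
      using True order_trans[OF abs_ratio_step_le[OF assms(1,2,4), of m X]] im by simp
  next
    case False
    have "\<bar>(fwd_diff ^^ i) (ratio_step p n a) m\<bar> \<le> fact i * (2 / p) ^ Suc i * e ^ Suc i"
      using abs_fwd_diff_iter_ratio_step_le[OF assms(1,2,4)] False by simp
    also have "\<dots> \<le> fact X * (2 / p) ^ Suc X * e ^ Suc i"
      using im assms(1,2) e by (intro mult_right_mono mult_mono fact_mono power_increasing) auto
    also have "\<dots> \<le> (2 * (C + X + 1) / p + fact X * (2 / p) ^ Suc X) * e ^ Suc i"
      using K e by (intro mult_right_mono) auto
    finally show ?thesis
      by simp
  qed
qed

lemma binom_ratio_diffs_bounded_Suc:
  assumes "0 < p" "p < 1" "0 \<le> C" "typical p C n a e" "0 \<le> K"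
    and "diffs_bounded Y K e 0 (binom_ratio p n a)"
  defines "Ks \<equiv> ratio_step_bound p C (Suc Y)"
  shows "diffs_bounded (Suc Y) (max ((1 + Ks) ^ Suc Y) (2 ^ Y * K * Ks)) e 0 (binom_ratio p n a)"
proof -
  have e: "0 \<le> e" "e \<le> 1" and a: "a \<le> n" and Ks: "0 \<le> Ks"
    using assms(4) typical_le[OF assms(1,4)] ratio_step_bound_nonneg[OF assms(1,3)]
    by (auto simp: typical_def Ks_def)
  have step: "diffs_bounded (Suc Y) Ks e 1 (ratio_step p n a)"
    unfolding Ks_def by (rule ratio_step_diffs_bounded[OF assms(1-4)])
  have step_le: "\<bar>ratio_step p n a l\<bar> \<le> Ks" if "l \<le> Suc Y" for l
    using diffs_bounded_abs_le[OF step that] e Ks mult_left_le[of e Ks] by simp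
  have "\<bar>binom_ratio p n a m\<bar> \<le> max ((1 + Ks) ^ Suc Y) (2 ^ Y * K * Ks) * e ^ 0" if "m \<le> Suc Y" for m
  proof -
    have "\<bar>binom_ratio p n a m\<bar> \<le> (1 + Ks) ^ m"
      using that by (intro abs_binom_ratio_le[OF a assms(1,2)]) (auto intro: step_le)
    also have "\<dots> \<le> (1 + Ks) ^ Suc Y"
      using that Ks by (intro power_increasing) auto
    finally show ?thesis
      by simp
  qed
  moreover have "diffs_bounded Y (2 ^ Y * K * Ks) e (Suc 0) (fwd_diff (binom_ratio p n a))"
    unfolding fwd_diff_binom_ratio[OF a]
    using diffs_bounded_mult[OF assms(6) diffs_bounded_mono[OF step _ order_refl e(1)] assms(5) Ks e(1)]
    by simp
  then have "diffs_bounded Y (max ((1 + Ks) ^ Suc Y) (2 ^ Y * K * Ks)) e (Suc 0) (fwd_diff (binom_ratio p n a))"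
    by (rule diffs_bounded_mono) (simp_all add: e(1))
  ultimately show ?thesis
    by (simp add: diffs_bounded_Suc_iff)
qed

lemma binom_ratio_diffs_bounded:
  assumes "0 < p" "p < 1" "0 \<le> C"
  shows "\<exists>K\<ge>0. \<forall>n a e. typical p C n a e \<longrightarrow> diffs_bounded Y K e 0 (binom_ratio p n a)"
proof (induction Y)
  case 0
  have "diffs_bounded 0 1 e 0 (binom_ratio p n a)" if "typical p C n a e" for n a e
    using binom_ratio_0[OF typical_le[OF assms(1) that] assms(1,2)] by (simp add: diffs_bounded_0_iff)
  then show ?case
    by (intro exI[of _ 1]) auto
next
  case (Suc Y)
  then obtain K where "0 \<le> K" "\<forall>n a e. typical p C n a e \<longrightarrow> diffs_bounded Y K e 0 (binom_ratio p n a)"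
    by blast
  then show ?case
    using binom_ratio_diffs_bounded_Suc[OF assms] ratio_step_bound_nonneg[OF assms(1,3)]
    by (intro exI[of _ "max ((1 + ratio_step_bound p C (Suc Y)) ^ Suc Y) (2 ^ Y * K * ratio_step_bound p C (Suc Y))"])
      (simp add: le_max_iff_disj)
qed

lemma binom_ratio_poly_rep:
  assumes "0 < p" "p < 1" "0 \<le> C"
  shows "\<exists>K\<ge>0. \<forall>n a e. typical p C n a e
    \<longrightarrow> poly_rep X K e (newton_coeff X (binom_ratio p n a)) (binom_ratio p n a)"
proof -
  obtain K where K: "0 \<le> K" "\<And>n a e. typical p C n a e \<Longrightarrow> diffs_bounded X K e 0 (binom_ratio p n a)"
    using binom_ratio_diffs_bounded[OF assms] by blast
  have "0 \<le> binomial_poly_coeff_sum X"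
    by (simp add: binomial_poly_coeff_sum_def sum_nonneg)
  then show ?thesis
    using K poly_rep_if_diffs_bounded unfolding typical_def
    by (intro exI[of _ "K * binomial_poly_coeff_sum X"]) auto
qed

section \<open>The deletion channel on block strings\<close>

text \<open>Expectation over the kept positions \<open>K\<close> before the cyclic shift, so that
  \<open>del_prob p w u = del_expect p w (\<lambda>v. cyc_shift_prob v u)\<close>.\<close>
definition del_expect :: "real \<Rightarrow> bool list \<Rightarrow> (bool list \<Rightarrow> real) \<Rightarrow> real" where
  "del_expect p w g =
     (\<Sum>K\<in>Pow {0..<length w}. p ^ (length w - card K) * (1 - p) ^ card K * g (nths w K))"

lemma Pow_atLeast0LessThan_Suc:
  "Pow {0..<Suc n} = image Suc ` Pow {0..<n} \<union> (\<lambda>K. insert 0 (Suc ` K)) ` Pow {0..<n}"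
proof (intro equalityI subsetI)
  fix K assume K: "K \<in> Pow {0..<Suc n}"
  define K' where "K' = {j. Suc j \<in> K}"
  have K': "K' \<in> Pow {0..<n}"
    using K unfolding K'_def by auto
  have "K - {0} = Suc ` K'"
  proof (rule set_eqI)
    fix x
    show "x \<in> K - {0} \<longleftrightarrow> x \<in> Suc ` K'"
      unfolding K'_def by (cases x) auto
  qed
  show "K \<in> image Suc ` Pow {0..<n} \<union> (\<lambda>K. insert 0 (Suc ` K)) ` Pow {0..<n}"
  proof (cases "0 \<in> K")
    case True
    then have "K = insert 0 (Suc ` K')"
      using \<open>K - {0} = Suc ` K'\<close> by blast
    from this K' have "K \<in> (\<lambda>K. insert 0 (Suc ` K)) ` Pow {0..<n}"
      by (rule image_eqI)
    then show ?thesis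
      by (rule UnI2)
  next
    case False
    then have "K = Suc ` K'"
      using \<open>K - {0} = Suc ` K'\<close> by blast
    from this K' have "K \<in> image Suc ` Pow {0..<n}"
      by (rule image_eqI)
    then show ?thesis
      by (rule UnI1)
  qed
qed auto

lemma sum_Pow_atLeast0LessThan_Suc:
  "(\<Sum>K\<in>Pow {0..<Suc n}. F K)
    = (\<Sum>K\<in>Pow {0..<n}. F (Suc ` K)) + (\<Sum>K\<in>Pow {0..<n}. F (insert 0 (Suc ` K)))"
proof -
  have inj_Suc_image: "inj_on (image Suc) (Pow {0..<n})"
    by (meson inj_Suc inj_image_eq_iff inj_onI)
  have "inj_on (\<lambda>K. insert 0 (Suc ` K)) (Pow {0..<n})"
  proof (rule inj_onI)
    fix A B assume "insert 0 (Suc ` A) = insert (0::nat) (Suc ` B)"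
    then have "Suc ` A = Suc ` B"
      by (metis Zero_not_Suc image_iff insert_ident)
    then show "A = B"
      by (meson inj_Suc inj_image_eq_iff)
  qed
  moreover have "(\<Sum>K\<in>Pow {0..<Suc n}. F K)
      = sum F (image Suc ` Pow {0..<n}) + sum F ((\<lambda>K. insert 0 (Suc ` K)) ` Pow {0..<n})"
    unfolding Pow_atLeast0LessThan_Suc by (rule sum.union_disjoint) auto
  ultimately show ?thesis
    by (simp add: sum.reindex[OF inj_Suc_image] sum.reindex)
qed

lemma del_expect_Nil: "del_expect p [] g = g []"
  by (simp add: del_expect_def)

lemma del_expect_Cons:
  "del_expect p (b # w) g = p * del_expect p w g + (1 - p) * del_expect p w (\<lambda>v. g (b # v))"
proof -
  let ?n = "length w"
  let ?wt = "\<lambda>K. p ^ (?n - card K) * (1 - p) ^ card K"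
  have "del_expect p (b # w) g
      = (\<Sum>K\<in>Pow {0..<?n}. p ^ (Suc ?n - card (Suc ` K)) * (1 - p) ^ card (Suc ` K) * g (nths (b # w) (Suc ` K)))
      + (\<Sum>K\<in>Pow {0..<?n}. p ^ (Suc ?n - card (insert 0 (Suc ` K))) * (1 - p) ^ card (insert 0 (Suc ` K))
           * g (nths (b # w) (insert 0 (Suc ` K))))"
    by (simp add: del_expect_def sum_Pow_atLeast0LessThan_Suc)
  also have "\<dots> = (\<Sum>K\<in>Pow {0..<?n}. p * (?wt K * g (nths w K)))
      + (\<Sum>K\<in>Pow {0..<?n}. (1 - p) * (?wt K * g (b # nths w K)))"
  proof (intro arg_cong2[where f = "(+)"] sum.cong refl)
    fix K assume "K \<in> Pow {0..<?n}"
    then have K: "finite K" "card K \<le> ?n"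
      using finite_subset card_mono[of "{0..<?n}" K] by auto
    have "nths (b # w) (Suc ` K) = nths w K" "nths (b # w) (insert 0 (Suc ` K)) = b # nths w K"
      by (simp_all add: nths_Cons image_iff)
    then show "p ^ (Suc ?n - card (Suc ` K)) * (1 - p) ^ card (Suc ` K) * g (nths (b # w) (Suc ` K))
        = p * (?wt K * g (nths w K))"
      "p ^ (Suc ?n - card (insert 0 (Suc ` K))) * (1 - p) ^ card (insert 0 (Suc ` K))
        * g (nths (b # w) (insert 0 (Suc ` K))) = (1 - p) * (?wt K * g (b # nths w K))"
      using K by (simp_all add: card_image Suc_diff_le)
  qed
  finally show ?thesis
    by (simp add: del_expect_def sum_distrib_left)
qed

fun lin_del_prob :: "real \<Rightarrow> bool list \<Rightarrow> bool list \<Rightarrow> real" where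
  "lin_del_prob p [] v = (if v = [] then 1 else 0)"
| "lin_del_prob p (b # w) v = p * lin_del_prob p w v
     + (1 - p) * (case v of [] \<Rightarrow> 0 | c # v' \<Rightarrow> if c = b then lin_del_prob p w v' else 0)"

lemma del_expect_indicator: "del_expect p w (\<lambda>v. of_bool (v = u)) = lin_del_prob p w u"
proof (induction w arbitrary: u)
  case Nil
  then show ?case
    by (simp add: del_expect_Nil)
next
  case (Cons b w)
  have "del_expect p w (\<lambda>v. of_bool (b # v = u))
      = (case u of [] \<Rightarrow> 0 | c # v' \<Rightarrow> if c = b then lin_del_prob p w v' else 0)"
    using Cons.IH by (cases u) (auto simp: del_expect_def)
  then show ?case
    by (simp add: del_expect_Cons Cons.IH)
qed

lemma lin_del_prob_eq_0: "count_list w True < count_list v True \<Longrightarrow> lin_del_prob p w v = 0"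
proof (induction w arbitrary: v)
  case Nil
  then show ?case by auto
next
  case (Cons b w)
  then show ?case
    by (cases v) (auto split: if_splits)
qed

lemma blocks_Nil [simp]: "blocks [] = []"
  by (simp add: blocks_def)

lemma blocks_Cons: "blocks (b # bs) = True # replicate b False @ blocks bs"
  by (simp add: blocks_def)

lemma blocks_append: "blocks (as @ bs) = blocks as @ blocks bs"
  by (simp add: blocks_def)

lemma count_list_blocks [simp]: "count_list (blocks bs) True = length bs"
  by (induction bs) (auto simp: blocks_Cons)

lemma length_blocks: "length (blocks bs) = (\<Sum>i<length bs. Suc (bs ! i))"
  by (induction bs) (auto simp: blocks_Cons sum.lessThan_Suc_shift simp del: sum.lessThan_Suc)

text \<open>All ones of the input must survive, in particular its leading one.\<close>
lemma lin_del_prob_blocks_False: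
  assumes "length bs \<le> count_list v True"
  shows "lin_del_prob p (blocks bs) (False # v) = 0"
proof (cases bs)
  case (Cons b bs')
  then have "lin_del_prob p (replicate b False @ blocks bs') (False # v) = 0"
    using assms by (intro lin_del_prob_eq_0) simp
  then show ?thesis
    using Cons by (simp add: blocks_Cons)
qed simp

lemma lin_del_prob_zeros_blocks:
  assumes "length bs = length cs"
  shows "lin_del_prob p (replicate b False @ blocks bs) (replicate c False @ blocks cs)
    = binom_mass p b c * lin_del_prob p (blocks bs) (blocks cs)"
proof (induction b arbitrary: c)
  case 0
  show ?case
  proof (cases c)
    case (Suc c')
    have "lin_del_prob p (blocks bs) (False # replicate c' False @ blocks cs) = 0"
      using assms by (intro lin_del_prob_blocks_False) simp
    then show ?thesis
      using Suc by (simp add: binom_mass_def)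
  qed (simp add: binom_mass_def)
next
  case (Suc b)
  show ?case
  proof (cases c)
    case 0
    have "(case blocks cs of [] \<Rightarrow> 0
        | c # v' \<Rightarrow> if c = False then lin_del_prob p (replicate b False @ blocks bs) v' else 0) = 0"
      by (cases cs) (auto simp: blocks_Cons)
    then show ?thesis
      using Suc.IH[of 0] 0 by (simp add: binom_mass_def)
  next
    case (Suc c')
    then show ?thesis
      using Suc.IH[of c] Suc.IH[of c'] by (simp add: binom_mass_Suc_Suc algebra_simps)
  qed
qed

lemma lin_del_prob_blocks:
  "length bs = length cs \<Longrightarrow>
     lin_del_prob p (blocks bs) (blocks cs) = (\<Prod>j<length bs. (1 - p) * binom_mass p (bs ! j) (cs ! j))"
proof (induction bs arbitrary: cs)
  case Nil
  then show ?case by simp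
next
  case (Cons b bs)
  then obtain c cs' where cs: "cs = c # cs'" "length bs = length cs'"
    by (cases cs) auto
  have "lin_del_prob p (replicate b False @ blocks bs) (True # replicate c False @ blocks cs') = 0"
    using cs by (intro lin_del_prob_eq_0) simp
  then have "lin_del_prob p (blocks (b # bs)) (blocks cs)
      = (1 - p) * (binom_mass p b c * lin_del_prob p (blocks bs) (blocks cs'))"
    using lin_del_prob_zeros_blocks[OF cs(2), of p b c] by (simp add: cs blocks_Cons)
  then show ?case
    using Cons.IH[OF cs(2)] by (simp add: prod.lessThan_Suc_shift cs del: prod.lessThan_Suc)
qed

lemma reflect_mod_involution: "s < L \<Longrightarrow> (L - (L - s) mod L) mod L = (s :: nat)"
  by (cases "s = 0") (auto simp: mod_if)

lemma sum_lessThan_reflect: "(\<Sum>s<L. f ((L - s) mod L)) = (\<Sum>s<(L :: nat). f s)"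
  by (rule sum.reindex_bij_witness[of _ "\<lambda>s. (L - s) mod L" "\<lambda>s. (L - s) mod L"])
    (simp_all add: reflect_mod_involution)

lemma rotate_mod_length_eq_0: "k mod length x = 0 \<Longrightarrow> rotate k x = x"
  by (subst rotate_conv_mod) simp

lemma rotate_eq_iff_rotate_reflect:
  assumes "length v = L" "length u = L" "s < L"
  shows "rotate s v = u \<longleftrightarrow> v = rotate ((L - s) mod L) u"
proof -
  have "((L - s) mod L + s) mod L = 0" "(s + (L - s) mod L) mod L = 0"
    using assms(3) by (simp_all add: mod_add_left_eq mod_add_right_eq)
  then have "rotate ((L - s) mod L) (rotate s v) = v" "rotate s (rotate ((L - s) mod L) u) = u"
    using assms(1,2) by (simp_all add: rotate_rotate rotate_mod_length_eq_0)
  then show ?thesis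
    by auto
qed

lemma cyc_shift_prob_eq_sum:
  assumes "u \<noteq> []"
  shows "cyc_shift_prob v u = (\<Sum>s<length u. of_bool (v = rotate s u)) / real (length u)"
proof (cases "length v = length u")
  case True
  let ?L = "length u"
  have "card {s. s < ?L \<and> rotate s v = u} = (\<Sum>s<?L. of_bool (rotate s v = u) :: nat)"
    by (simp add: Collect_conj_eq lessThan_def Int_commute)
  also have "\<dots> = (\<Sum>s<?L. of_bool (v = rotate ((?L - s) mod ?L) u))"
    using True by (intro sum.cong refl) (simp add: rotate_eq_iff_rotate_reflect)
  also have "\<dots> = (\<Sum>s<?L. of_bool (v = rotate s u))"
    by (rule sum_lessThan_reflect)
  finally have "card {s. s < ?L \<and> rotate s v = u} = (\<Sum>s<?L. of_bool (v = rotate s u) :: nat)" .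
  moreover have "v \<noteq> []"
    using assms True by auto
  ultimately show ?thesis
    using True by (simp add: cyc_shift_prob_def)
next
  case False
  then have "v \<noteq> rotate s u" "rotate s v \<noteq> u" for s
    by (metis length_rotate)+
  then show ?thesis
    using assms by (simp add: cyc_shift_prob_def)
qed

lemma del_prob_eq_sum_rotate:
  assumes "u \<noteq> []"
  shows "del_prob p w u = (\<Sum>s<length u. lin_del_prob p w (rotate s u)) / real (length u)"
proof -
  let ?P = "Pow {0..<length w}"
  let ?wt = "\<lambda>K. p ^ (length w - card K) * (1 - p) ^ card K"
  have "del_prob p w u = (\<Sum>K\<in>?P. ?wt K * ((\<Sum>s<length u. of_bool (nths w K = rotate s u)) / real (length u)))"
    unfolding del_prob_def cyc_shift_prob_eq_sum[OF assms] by (rule refl)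
  also have "\<dots> = (\<Sum>K\<in>?P. \<Sum>s<length u. ?wt K * of_bool (nths w K = rotate s u)) / real (length u)"
    by (simp only: sum_divide_distrib[symmetric] sum_distrib_left times_divide_eq_right)
  also have "\<dots> = (\<Sum>s<length u. \<Sum>K\<in>?P. ?wt K * of_bool (nths w K = rotate s u)) / real (length u)"
    by (subst sum.swap) (rule refl)
  also have "\<dots> = (\<Sum>s<length u. lin_del_prob p w (rotate s u)) / real (length u)"
    unfolding del_expect_indicator[symmetric] del_expect_def by (rule refl)
  finally show ?thesis .
qed


lemma sum_lessThan_add: "(\<Sum>s<m + l. f s) = (\<Sum>s<m. f s) + (\<Sum>t<l. f (m + t))"
  for f :: "nat \<Rightarrow> 'a::comm_monoid_add"
  by (induction l) (auto simp: add.assoc)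

lemma sum_lessThan_sum:
  "(\<Sum>s<(\<Sum>r<k. l r). f s) = (\<Sum>r<k. \<Sum>t<l r. f ((\<Sum>i<r. l i) + t))"
  for l :: "nat \<Rightarrow> nat" and f :: "nat \<Rightarrow> 'a::comm_monoid_add"
  by (induction k) (auto simp: sum_lessThan_add)

lemma rotate_blocks:
  assumes "r < length as"
  shows "rotate (length (blocks (take r as))) (blocks as) = blocks (rotate r as)"
proof -
  have "rotate (length (blocks (take r as))) (blocks as) = blocks (drop r as) @ blocks (take r as)"
    using rotate_append by (metis append_take_drop_id blocks_append)
  also have "\<dots> = blocks (rotate r as)"
    using assms by (simp add: blocks_append[symmetric] rotate_drop_take)
  finally show ?thesis .
qed

lemma count_list_rotate [simp]: "count_list (rotate n xs) x = count_list xs x"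
  by (metis rotate_drop_take count_list_append append_take_drop_id add.commute)

lemma lin_del_prob_blocks_rotate_inside:
  assumes "length bs \<le> length cs" "0 < t" "t \<le> cs ! r" "r < length cs"
  shows "lin_del_prob p (blocks bs) (rotate t (blocks (rotate r cs))) = 0"
proof -
  define V where "V = True # replicate (cs ! r) False @ blocks (drop (Suc r) cs @ take r cs)"
  have V: "blocks (rotate r cs) = V"
    unfolding V_def using assms(4) by (simp add: rotate_drop_take Cons_nth_drop_Suc[symmetric] blocks_Cons)
  have "hd (rotate t V) = V ! t"
    using assms(3) by (simp add: hd_rotate_conv_nth V_def)
  also have "\<dots> = False"
    using assms(2,3) by (cases t) (auto simp: V_def nth_append)
  finally obtain rest where "rotate t V = False # rest"
    by (cases "rotate t V") (auto simp: V_def)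
  moreover have "count_list (rotate t V) True = length cs"
    unfolding V[symmetric] by simp
  ultimately show ?thesis
    using V assms(1) lin_del_prob_blocks_False by simp
qed

lemma del_prob_blocks:
  assumes "length bs = length as" "0 < length as"
  shows "del_prob p (blocks bs) (blocks as) = (\<Sum>r<length as. \<Prod>j<length as.
    (1 - p) * binom_mass p (bs ! j) (as ! ((r + j) mod length as))) / real (length (blocks as))"
proof -
  let ?k = "length as"
  let ?L = "\<lambda>r. length (blocks (take r as))"
  have ne: "blocks as \<noteq> []"
    using assms by (cases as) (auto simp: blocks_Cons)
  have L: "?L r = (\<Sum>i<r. Suc (as ! i))" if "r < ?k" for r
    using that by (simp add: length_blocks min_def)
  have "(\<Sum>s<length (blocks as). lin_del_prob p (blocks bs) (rotate s (blocks as)))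
      = (\<Sum>r<?k. \<Sum>t<Suc (as ! r). lin_del_prob p (blocks bs) (rotate ((\<Sum>i<r. Suc (as ! i)) + t) (blocks as)))"
    unfolding length_blocks[of as] by (rule sum_lessThan_sum)
  also have "\<dots> = (\<Sum>r<?k. lin_del_prob p (blocks bs) (blocks (rotate r as)))"
  proof (rule sum.cong [OF refl])
    fix r assume r: "r \<in> {..<?k}"
    have "r < ?k"
      using r by simp
    then have rot: "rotate ((\<Sum>i<r. Suc (as ! i)) + t) (blocks as) = rotate t (blocks (rotate r as))" for t
      by (metis L rotate_blocks rotate_rotate add.commute)
    have "lin_del_prob p (blocks bs) (rotate (Suc t) (blocks (rotate r as))) = 0" if "t < as ! r" for t
      using assms r that by (intro lin_del_prob_blocks_rotate_inside) auto
    then show "(\<Sum>t<Suc (as ! r). lin_del_prob p (blocks bs) (rotate ((\<Sum>i<r. Suc (as ! i)) + t) (blocks as)))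
        = lin_del_prob p (blocks bs) (blocks (rotate r as))"
      unfolding rot by (simp add: sum.lessThan_Suc_shift del: sum.lessThan_Suc)
  qed
  also have "\<dots> = (\<Sum>r<?k. \<Prod>j<?k. (1 - p) * binom_mass p (bs ! j) (as ! ((r + j) mod ?k)))"
    using assms by (intro sum.cong refl) (simp add: lin_del_prob_blocks nth_rotate)
  finally show ?thesis
    using del_prob_eq_sum_rotate[OF ne] by simp
qed

lemma sum_prod_rotate_index:
  fixes F :: "nat \<Rightarrow> nat \<Rightarrow> 'a::comm_semiring_1"
  shows "(\<Sum>r<k. \<Prod>j<k. F j ((r + j) mod k)) = (\<Sum>r<k. \<Prod>i<k. F ((i + r) mod k) i)"
proof -
  have "(\<Prod>j<k. F j ((r + j) mod k)) = (\<Prod>i<k. F ((i + (k - r)) mod k) i)" if r: "r < k" for r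
  proof (rule prod.reindex_bij_witness[of _ "\<lambda>i. (i + (k - r)) mod k" "\<lambda>j. (r + j) mod k"])
    fix j assume "j \<in> {..<k}"
    moreover have "((r + j) mod k + (k - r)) mod k = (r + j + (k - r)) mod k"
      by (simp only: mod_add_left_eq)
    moreover have "r + j + (k - r) = j + k"
      using r by simp
    ultimately show "((r + j) mod k + (k - r)) mod k = j" "(r + j) mod k \<in> {..<k}"
      "F (((r + j) mod k + (k - r)) mod k) ((r + j) mod k) = F j ((r + j) mod k)"
      by auto
  next
    fix i assume "i \<in> {..<k}"
    moreover have "(r + (i + (k - r)) mod k) mod k = (r + (i + (k - r))) mod k"
      by (simp only: mod_add_right_eq)
    moreover have "r + (i + (k - r)) = i + k"
      using r by simp
    ultimately show "(r + (i + (k - r)) mod k) mod k = i" "(i + (k - r)) mod k \<in> {..<k}"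
      by auto
  qed
  then have "(\<Sum>r<k. \<Prod>j<k. F j ((r + j) mod k)) = (\<Sum>r<k. \<Prod>i<k. F ((i + (k - r) mod k) mod k) i)"
    by (simp add: mod_add_right_eq)
  also have "\<dots> = (\<Sum>r<k. \<Prod>i<k. F ((i + r) mod k) i)"
    by (rule sum_lessThan_reflect[where f = "\<lambda>r. \<Prod>i<k. F ((i + r) mod k) i"])
  finally show ?thesis .
qed

section \<open>Cyclic sums and cyclic statistics\<close>

text \<open>Multi-index notation for cyclic statistics: \<open>E\<close> stands for the index list in which
  \<open>i\<close> occurs \<open>E i\<close> times.\<close>
definition repeat_indices :: "nat \<Rightarrow> (nat \<Rightarrow> nat) \<Rightarrow> nat list" where
  "repeat_indices k E = concat (map (\<lambda>i. replicate (E i) i) [0..<k])"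

lemma prod_list_map_repeat_indices: "prod_list (map g (repeat_indices k E)) = (\<Prod>i<k. g i ^ E i)"
  by (induction k) (auto simp: repeat_indices_def prod_list_replicate)

lemma length_repeat_indices: "length (repeat_indices k E) = (\<Sum>i<k. E i)"
  by (induction k) (auto simp: repeat_indices_def)

lemma cyc_stat_repeat_indices:
  "real (cyc_stat v (repeat_indices (length v) E))
     = (\<Sum>r<length v. \<Prod>i<length v. real (v ! ((i + r) mod length v)) ^ E i)"
  unfolding cyc_stat_def prod_list_map_repeat_indices by simp

definition cyc_prod_sum :: "(nat \<Rightarrow> nat \<Rightarrow> real) \<Rightarrow> nat list \<Rightarrow> real" where
  "cyc_prod_sum f v = (\<Sum>r<length v. \<Prod>i<length v. f i (v ! ((i + r) mod length v)))"

definition stat_gap :: "nat \<Rightarrow> nat list \<Rightarrow> nat list \<Rightarrow> real" where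
  "stat_gap X v w = (\<Sum>E\<in>PiE {..<length v} (\<lambda>_. {..X}).
     \<bar>real (cyc_stat v (repeat_indices (length v) E)) - real (cyc_stat w (repeat_indices (length v) E))\<bar>)"

lemma cyc_prod_sum_expand:
  assumes f: "\<forall>i<length v. poly_rep X K e (c i) (f i)" and v: "\<forall>i<length v. v ! i \<le> X"
  shows "cyc_prod_sum f v = (\<Sum>E\<in>PiE {..<length v} (\<lambda>_. {..X}).
    (\<Prod>i<length v. c i (E i)) * real (cyc_stat v (repeat_indices (length v) E)))"
proof -
  let ?k = "length v"
  have "cyc_prod_sum f v = (\<Sum>r<?k. \<Prod>i<?k. \<Sum>j\<le>X. c i j * real (v ! ((i + r) mod ?k)) ^ j)"
    unfolding cyc_prod_sum_def
  proof (intro sum.cong prod.cong refl)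
    fix r i assume "i \<in> {..<?k}"
    then have "(i + r) mod ?k < ?k"
      by (intro mod_less_divisor) auto
    then show "f i (v ! ((i + r) mod ?k)) = (\<Sum>j\<le>X. c i j * real (v ! ((i + r) mod ?k)) ^ j)"
      using f v \<open>i \<in> {..<?k}\<close> by (simp add: poly_rep_def)
  qed
  also have "\<dots> = (\<Sum>r<?k. \<Sum>E\<in>PiE {..<?k} (\<lambda>_. {..X}). \<Prod>i<?k. c i (E i) * real (v ! ((i + r) mod ?k)) ^ E i)"
    by (intro sum.cong refl prod_sum_PiE) auto
  also have "\<dots> = (\<Sum>E\<in>PiE {..<?k} (\<lambda>_. {..X}). \<Sum>r<?k. \<Prod>i<?k. c i (E i) * real (v ! ((i + r) mod ?k)) ^ E i)"
    by (rule sum.swap)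
  also have "\<dots> = (\<Sum>E\<in>PiE {..<?k} (\<lambda>_. {..X}). (\<Prod>i<?k. c i (E i)) * real (cyc_stat v (repeat_indices ?k E)))"
    by (intro sum.cong refl) (simp add: cyc_stat_repeat_indices prod.distrib sum_distrib_left)
  finally show ?thesis .
qed

lemma abs_prod_coeffs_le:
  fixes c :: "nat \<Rightarrow> nat \<Rightarrow> real"
  assumes "\<forall>i<k. \<bar>c i (E i)\<bar> \<le> K * e ^ E i" "0 \<le> e" "0 \<le> K"
  shows "\<bar>\<Prod>i<k. c i (E i)\<bar> \<le> K ^ k * e ^ (\<Sum>i<k. E i)"
proof -
  have "\<bar>\<Prod>i<k. c i (E i)\<bar> = (\<Prod>i<k. \<bar>c i (E i)\<bar>)"
    by (simp add: abs_prod)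
  also have "\<dots> \<le> (\<Prod>i<k. K * e ^ E i)"
    using assms by (intro prod_mono) auto
  also have "\<dots> = K ^ k * e ^ (\<Sum>i<k. E i)"
    by (simp add: prod.distrib power_sum)
  finally show ?thesis .
qed

lemma cyc_stat_repeat_indices_eq:
  assumes "length w = length v"
    and "\<forall>is. 1 \<le> length is \<and> length is \<le> q \<longrightarrow> cyc_stat v is = cyc_stat w is"
    and "(\<Sum>i<length v. E i) \<le> q"
  shows "cyc_stat v (repeat_indices (length v) E) = cyc_stat w (repeat_indices (length v) E)"
proof (cases "(\<Sum>i<length v. E i) = 0")
  case True
  then have "repeat_indices (length v) E = []"
    by (simp add: length_repeat_indices flip: length_0_conv)
  then show ?thesis
    using assms(1) by (simp add: cyc_stat_def)
next
  case False
  then have "1 \<le> length (repeat_indices (length v) E) \<and> length (repeat_indices (length v) E) \<le> q"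
    using assms(3) by (simp add: length_repeat_indices del: sum_eq_0_iff)
  then show ?thesis
    using assms(2) by simp
qed

text \<open>Terms of order at most \<open>q\<close> cancel; all others carry a factor \<open>e ^ (q + 1)\<close>.\<close>
lemma abs_cyc_prod_sum_diff_le:
  assumes "length w = length v" "\<forall>i<length v. v ! i \<le> X" "\<forall>i<length v. w ! i \<le> X"
    and f: "\<forall>i<length v. poly_rep X K e (c i) (f i)" and "0 \<le> e" "e \<le> 1" "0 \<le> K"
    and stat: "\<forall>is. 1 \<le> length is \<and> length is \<le> q \<longrightarrow> cyc_stat v is = cyc_stat w is"
  shows "\<bar>cyc_prod_sum f v - cyc_prod_sum f w\<bar> \<le> K ^ length v * e ^ (q + 1) * stat_gap X v w"
proof -
  let ?k = "length v"
  let ?Es = "PiE {..<?k} (\<lambda>_. {..X})"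
  let ?a = "\<lambda>E. \<Prod>i<?k. c i (E i)"
  let ?T = "\<lambda>u E. real (cyc_stat u (repeat_indices ?k E))"
  have "cyc_prod_sum f v - cyc_prod_sum f w = (\<Sum>E\<in>?Es. ?a E * (?T v E - ?T w E))"
    using cyc_prod_sum_expand[OF f assms(2)] cyc_prod_sum_expand[of w X K e c f] assms(1,3) f
    by (simp add: sum_subtractf[symmetric] right_diff_distrib)
  also have "\<bar>\<dots>\<bar> \<le> (\<Sum>E\<in>?Es. K ^ ?k * e ^ (q + 1) * \<bar>?T v E - ?T w E\<bar>)"
  proof (intro order_trans[OF sum_abs] sum_mono)
    fix E assume "E \<in> ?Es"
    show "\<bar>?a E * (?T v E - ?T w E)\<bar> \<le> K ^ ?k * e ^ (q + 1) * \<bar>?T v E - ?T w E\<bar>"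
    proof (cases "(\<Sum>i<?k. E i) \<le> q")
      case True
      then show ?thesis
        using cyc_stat_repeat_indices_eq[OF assms(1) stat] by simp
    next
      case False
      have "\<bar>?a E\<bar> \<le> K ^ ?k * e ^ (\<Sum>i<?k. E i)"
        using f assms(5,7) by (intro abs_prod_coeffs_le) (auto simp: poly_rep_def)
      also have "\<dots> \<le> K ^ ?k * e ^ (q + 1)"
        using False assms(5-7) by (intro mult_left_mono power_decreasing) auto
      finally show ?thesis
        by (simp add: abs_mult mult_right_mono)
    qed
  qed
  finally show ?thesis
    by (simp add: stat_gap_def sum_distrib_left)
qed

lemma cyc_prod_sum_zeros: "\<forall>i<k. f i 0 = 1 \<Longrightarrow> cyc_prod_sum f (replicate k 0) = real k"
  by (simp add: cyc_prod_sum_def)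


lemma cyc_prod_sum_ratio_close:
  assumes "0 < k" "length v = k" "length w = k" "\<forall>i<k. v ! i \<le> X" "\<forall>i<k. w ! i \<le> X"
    and f: "\<forall>i<k. poly_rep X K e (c i) (f i)" "\<forall>i<k. f i 0 = 1" and e: "0 \<le> e" "e \<le> 1" and "0 \<le> K"
    and stat: "\<forall>is. 1 \<le> length is \<and> length is \<le> q \<longrightarrow> cyc_stat v is = cyc_stat w is"
    and small: "K ^ k * stat_gap X w (replicate k 0) * e \<le> k / 2"
  shows "\<bar>cyc_prod_sum f v / cyc_prod_sum f w - 1\<bar> \<le> 2 * K ^ k * stat_gap X v w / k * e ^ (q + 1)"
proof -
  have "\<bar>cyc_prod_sum f w - cyc_prod_sum f (replicate k 0)\<bar> \<le> K ^ k * e ^ (0 + 1) * stat_gap X w (replicate k 0)"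
    using abs_cyc_prod_sum_diff_le[of "replicate k 0" w X K e c f 0] assms by simp
  then have w: "k / 2 \<le> cyc_prod_sum f w"
    using small cyc_prod_sum_zeros[of k f] f(2) by (simp add: mult_ac abs_le_iff)
  have diff: "\<bar>cyc_prod_sum f v - cyc_prod_sum f w\<bar> \<le> K ^ k * e ^ (q + 1) * stat_gap X v w"
    using abs_cyc_prod_sum_diff_le[of w v X K e c f q] assms by simp
  have pos: "0 < cyc_prod_sum f w"
    using w assms(1) by linarith
  then have "cyc_prod_sum f v / cyc_prod_sum f w - 1 = (cyc_prod_sum f v - cyc_prod_sum f w) / cyc_prod_sum f w"
    by (simp add: field_simps)
  then have "\<bar>cyc_prod_sum f v / cyc_prod_sum f w - 1\<bar> = \<bar>cyc_prod_sum f v - cyc_prod_sum f w\<bar> / cyc_prod_sum f w"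
    using pos by simp
  also have "\<dots> \<le> K ^ k * e ^ (q + 1) * stat_gap X v w / (k / 2)"
    using diff w assms(1) by (intro frac_le) (auto intro: order_trans[OF abs_ge_zero])
  also have "\<dots> = 2 * K ^ k * stat_gap X v w / k * e ^ (q + 1)"
    by (simp add: field_simps)
  finally show ?thesis .
qed

section \<open>The ratio of output probabilities\<close>

lemma del_prob_shifted_blocks:
  assumes "length v = length as" "0 < length as" "\<forall>i<length as. as ! i \<le> n" "0 < p" "p < 1"
  shows "del_prob p (blocks (map (\<lambda>x. n + x) v)) (blocks as)
    = (\<Prod>i<length as. (1 - p) * binom_mass p n (as ! i))
      * cyc_prod_sum (\<lambda>i. binom_ratio p n (as ! i)) v / real (length (blocks as))"
proof -
  let ?k = "length as"
  have "(\<Sum>r<?k. \<Prod>j<?k. (1 - p) * binom_mass p (map (\<lambda>x. n + x) v ! j) (as ! ((r + j) mod ?k)))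
      = (\<Sum>r<?k. \<Prod>i<?k. (1 - p) * binom_mass p (n + v ! ((i + r) mod ?k)) (as ! i))"
    using sum_prod_rotate_index[of "\<lambda>j i. (1 - p) * binom_mass p (n + v ! j) (as ! i)" ?k] assms(1)
    by simp
  also have "\<dots> = (\<Sum>r<?k. \<Prod>i<?k. ((1 - p) * binom_mass p n (as ! i)) * binom_ratio p n (as ! i) (v ! ((i + r) mod ?k)))"
  proof (intro sum.cong prod.cong refl)
    fix r i assume "i \<in> {..<?k}"
    then have "binom_mass p n (as ! i) \<noteq> 0"
      using assms(3-5) binom_mass_pos[of "as ! i" n p] by simp
    then show "(1 - p) * binom_mass p (n + v ! ((i + r) mod ?k)) (as ! i)
        = ((1 - p) * binom_mass p n (as ! i)) * binom_ratio p n (as ! i) (v ! ((i + r) mod ?k))"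
      by (simp add: binom_ratio_def)
  qed
  also have "\<dots> = (\<Prod>i<?k. (1 - p) * binom_mass p n (as ! i)) * cyc_prod_sum (\<lambda>i. binom_ratio p n (as ! i)) v"
    using assms(1) by (simp add: cyc_prod_sum_def prod.distrib sum_distrib_left)
  finally show ?thesis
    using del_prob_blocks[of "map (\<lambda>x. n + x) v" as p] assms(1,2) by simp
qed

definition del_ratio :: "real \<Rightarrow> nat list \<Rightarrow> nat list \<Rightarrow> nat \<Rightarrow> nat list \<Rightarrow> real" where
  "del_ratio p x y n as = del_prob p (blocks (map (\<lambda>xi. n + xi) x)) (blocks as)
     / del_prob p (blocks (map (\<lambda>yi. n + yi) y)) (blocks as)"

lemma del_ratio_eq_cyc_prod_sum_ratio:
  assumes "length v = length as" "length w = length as" "0 < length as" "\<forall>i<length as. as ! i \<le> n"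
    and "0 < p" "p < 1"
  shows "del_ratio p v w n as
    = cyc_prod_sum (\<lambda>i. binom_ratio p n (as ! i)) v / cyc_prod_sum (\<lambda>i. binom_ratio p n (as ! i)) w"
proof -
  define Q where "Q = (\<Prod>i<length as. (1 - p) * binom_mass p n (as ! i))"
  define L where "L = real (length (blocks as))"
  have "0 < Q"
    unfolding Q_def using assms(4-6) by (intro prod_pos) (simp add: binom_mass_pos)
  moreover have "0 < L"
    unfolding L_def using assms(3) by (cases as) (auto simp: blocks_Cons)
  ultimately show ?thesis
    unfolding del_ratio_def del_prob_shifted_blocks[OF assms(1,3-6)] del_prob_shifted_blocks[OF assms(2-6)]
      Q_def[symmetric] L_def[symmetric]
    by simp
qed

lemma del_ratio_close:
  assumes "0 < p" "p < 1" "0 < k" "length x = k" "length y = k" "length as = k"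
    and X: "\<forall>i<k. x ! i \<le> X" "\<forall>i<k. y ! i \<le> X"
    and typical_as: "\<forall>i<k. typical p C n (as ! i) e"
    and K: "0 \<le> K" "\<forall>n a e. typical p C n a e
      \<longrightarrow> poly_rep X K e (newton_coeff X (binom_ratio p n a)) (binom_ratio p n a)"
    and stat: "\<forall>is. 1 \<le> length is \<and> length is \<le> z \<longrightarrow> cyc_stat x is = cyc_stat y is"
    and small: "K ^ k * stat_gap X y (replicate k 0) * e \<le> k / 2"
  shows "\<bar>del_ratio p x y n as - 1\<bar> \<le> 2 * K ^ k * stat_gap X x y / k * e ^ (z + 1)"
proof -
  have e: "0 \<le> e" "e \<le> 1"
    using typical_as assms(3) by (auto simp: typical_def)
  have as: "\<forall>i<k. as ! i \<le> n" and ratio_0: "\<forall>i<k. binom_ratio p n (as ! i) 0 = 1"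
    using typical_as typical_le[OF assms(1)] binom_ratio_0 assms(1,2) by blast+
  have "\<forall>i<k. poly_rep X K e (newton_coeff X (binom_ratio p n (as ! i))) (binom_ratio p n (as ! i))"
    using K(2) typical_as by blast
  from cyc_prod_sum_ratio_close[OF assms(3-5) X this ratio_0 e K(1) stat small]
  show ?thesis
    using del_ratio_eq_cyc_prod_sum_ratio[of x as y n p] as assms(1-6) by simp
qed

lemma del_ratio_bound:
  assumes "0 < k" "0 < p" "p < 1" "0 < C" "length x = k" "length y = k"
    and stat: "\<forall>is. 1 \<le> length is \<and> length is \<le> z \<longrightarrow> cyc_stat x is = cyc_stat y is"
  shows "\<exists>M d. 0 < d \<and> (\<forall>n e as. 0 < n \<and> 0 \<le> e \<and> e \<le> d \<and> 1 / real n \<le> e ^ 2 \<and> length as = k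
      \<and> (\<forall>j<k. \<bar>real (as ! j) - real n * (1 - p)\<bar> \<le> C * real n * e)
      \<longrightarrow> \<bar>del_ratio p x y n as - 1\<bar> \<le> M * e ^ (z + 1))"
proof -
  define X where "X = sum_list x + sum_list y"
  have X: "\<forall>i<k. x ! i \<le> X" "\<forall>i<k. y ! i \<le> X"
    using assms(5,6) elem_le_sum_list[of _ x] elem_le_sum_list[of _ y] unfolding X_def by fastforce+
  obtain K where K: "0 \<le> K" "\<forall>n a e. typical p C n a e
      \<longrightarrow> poly_rep X K e (newton_coeff X (binom_ratio p n a)) (binom_ratio p n a)"
    using binom_ratio_poly_rep[of p C X] assms(2-4) by auto
  define G where "G = K ^ k * stat_gap X y (replicate k 0)"
  have "0 \<le> G"
    using K(1) by (simp add: G_def stat_gap_def sum_nonneg)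
  define d where "d = min (min 1 (p / (2 * C))) (k / (2 * G + 2))"
  have "0 < d"
    using assms(1-4) \<open>0 \<le> G\<close> by (simp add: d_def add_nonneg_pos)
  moreover have "\<bar>del_ratio p x y n as - 1\<bar> \<le> 2 * K ^ k * stat_gap X x y / k * e ^ (z + 1)"
    if n: "0 < n" "0 \<le> e" "e \<le> d" "1 / real n \<le> e ^ 2" "length as = k"
      "\<forall>j<k. \<bar>real (as ! j) - real n * (1 - p)\<bar> \<le> C * real n * e" for n e as
  proof -
    have e: "e \<le> 1" "e \<le> p / (2 * C)" "e \<le> k / (2 * G + 2)"
      using n(3) by (simp_all add: d_def)
    have "C * e \<le> C * (p / (2 * C))"
      using e(2) assms(4) by (intro mult_left_mono) auto
    then have "\<forall>i<k. typical p C n (as ! i) e"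
      using n(1,2,4,6) e(1) assms(4) unfolding typical_def by simp
    moreover have "(2 * G + 2) * e \<le> k"
      using e(3) \<open>0 \<le> G\<close> by (simp add: le_divide_eq mult.commute)
    then have "G * e \<le> k / 2"
      using n(2) by (simp add: algebra_simps)
    ultimately show ?thesis
      using del_ratio_close[OF assms(2,3,1,5,6) n(5) X _ K stat] by (simp add: G_def)
  qed
  ultimately show ?thesis
    by (intro exI[of _ "2 * K ^ k * stat_gap X x y / k"] exI[of _ d]) simp
qed

lemma eventually_ln_ge_1_and_sqrt_ln_div_le:
  assumes "0 < d"
  shows "eventually (\<lambda>n::nat. 1 \<le> ln (real n) \<and> sqrt (ln (real n) / real n) \<le> d) sequentially"
proof -
  have "((\<lambda>n::nat. ln (real n) / real n) \<longlongrightarrow> 0) sequentially"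
    by (rule filterlim_compose[OF ln_x_over_x_tendsto_0 filterlim_real_sequentially])
  then have "eventually (\<lambda>n::nat. ln (real n) / real n < d ^ 2) sequentially"
    using assms by (intro order_tendstoD(2)) auto
  moreover have "filterlim (\<lambda>n::nat. ln (real n)) at_top sequentially"
    by (rule filterlim_compose[OF ln_at_top filterlim_real_sequentially])
  then have "eventually (\<lambda>n::nat. 1 \<le> ln (real n)) sequentially"
    by (simp add: filterlim_at_top)
  ultimately show ?thesis
    by eventually_elim (use assms in \<open>auto intro: real_le_lsqrt less_imp_le\<close>)
qed

lemma sqrt_ln_div:
  assumes "1 \<le> ln (real n)"
  shows "0 < n" "0 \<le> sqrt (ln (real n) / real n)"
    "sqrt (ln (real n) / real n) ^ 2 = ln (real n) / real n"
    "1 / real n \<le> sqrt (ln (real n) / real n) ^ 2"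
    "sqrt (real n * ln (real n)) = real n * sqrt (ln (real n) / real n)"
proof -
  show "0 < n"
    using assms by (cases n) auto
  then have "0 \<le> ln (real n) / real n" and eq: "real n * ln (real n) = real n ^ 2 * (ln (real n) / real n)"
    using assms by (simp_all add: power2_eq_square)
  then show "0 \<le> sqrt (ln (real n) / real n)" "sqrt (ln (real n) / real n) ^ 2 = ln (real n) / real n"
    "1 / real n \<le> sqrt (ln (real n) / real n) ^ 2"
    using assms by (simp_all add: divide_right_mono)
  show "sqrt (real n * ln (real n)) = real n * sqrt (ln (real n) / real n)"
    unfolding eq real_sqrt_mult by simp
qed

lemma power_Suc_eq_square_powr:
  fixes e :: real
  assumes "0 \<le> e"
  shows "e ^ (z + 1) = (e ^ 2) powr ((real z + 1) / 2)"
proof -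
  have "(e ^ 2) powr ((real z + 1) / 2) = (e powr 2) powr ((real z + 1) / 2)"
    using assms by (simp add: powr_realpow)
  also have "\<dots> = e powr (2 * ((real z + 1) / 2))"
    by (rule powr_powr)
  also have "2 * ((real z + 1) / 2) = real (z + 1)"
    by simp
  also have "e powr real (z + 1) = e ^ (z + 1)"
    using assms powr_realpow[of e "z + 1"] by (cases "e = 0") auto
  finally show ?thesis ..
qed

lemma mult_powr_le_powr_mult:
  fixes c t r :: real
  assumes "1 \<le> c" "0 \<le> t" "1 \<le> r"
  shows "c * t powr r \<le> (c * t) powr r"
proof -
  have "c \<le> c powr r"
    using powr_mono[of 1 r c] assms(1,3) by simp
  then show ?thesis
    using assms(1,2) by (simp add: powr_mult mult_right_mono)
qed

lemma del_ratio_asymptotic: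
  assumes "0 < k" "0 < p" "p < 1" "0 < C" "length x = k" "length y = k"
    and "\<forall>is. 1 \<le> length is \<and> length is \<le> z \<longrightarrow> cyc_stat x is = cyc_stat y is"
  shows "\<exists>N M. \<forall>n as. N \<le> n \<and> length as = k
      \<and> (\<forall>j<k. \<bar>real (as ! j) - real n * (1 - p)\<bar> \<le> C * sqrt (real n * ln (real n)))
      \<longrightarrow> \<bar>del_ratio p x y n as - 1\<bar> \<le> M * (ln (real n) / real n) powr ((real z + 1) / 2)"
proof -
  obtain M d where "0 < d" and bound: "\<forall>n e as. 0 < n \<and> 0 \<le> e \<and> e \<le> d \<and> 1 / real n \<le> e ^ 2
      \<and> length as = k \<and> (\<forall>j<k. \<bar>real (as ! j) - real n * (1 - p)\<bar> \<le> C * real n * e)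
      \<longrightarrow> \<bar>del_ratio p x y n as - 1\<bar> \<le> M * e ^ (z + 1)"
    using del_ratio_bound[OF assms] by blast
  obtain N where N: "\<forall>n\<ge>N. 1 \<le> ln (real n) \<and> sqrt (ln (real n) / real n) \<le> d"
    using eventually_ln_ge_1_and_sqrt_ln_div_le[OF \<open>0 < d\<close>] by (auto simp: eventually_sequentially)
  have "\<bar>del_ratio p x y n as - 1\<bar> \<le> M * (ln (real n) / real n) powr ((real z + 1) / 2)"
    if A: "N \<le> n" "length as = k"
      "\<forall>j<k. \<bar>real (as ! j) - real n * (1 - p)\<bar> \<le> C * sqrt (real n * ln (real n))" for n as
  proof -
    define e where "e = sqrt (ln (real n) / real n)"
    have ln: "1 \<le> ln (real n)" "e \<le> d"
      using N A(1) by (auto simp: e_def)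
    note n = sqrt_ln_div[OF ln(1), folded e_def]
    have "\<forall>j<k. \<bar>real (as ! j) - real n * (1 - p)\<bar> \<le> C * real n * e"
      using A(3) n(5) by (simp add: mult.assoc)
    then have "\<bar>del_ratio p x y n as - 1\<bar> \<le> M * e ^ (z + 1)"
      using bound ln(2) n(1,2,4) A(2) by blast
    then show ?thesis
      unfolding power_Suc_eq_square_powr[OF n(2)] n(3) .
  qed
  then show ?thesis
    by blast
qed

theorem lemma5p3:
  fixes k z :: nat and p C :: real and x y :: "nat list"
  assumes "k > 0" and "0 < p" and "p < 1" and "z \<ge> 1"
    and "length x = k" and "length y = k"
    and "mset x = mset y"
    and "\<forall>is. 1 \<le> length is \<and> length is \<le> z \<longrightarrow> cyc_stat x is = cyc_stat y is"
    and "C > 0"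
  shows "\<exists>N c0. \<forall>(n::nat) (c::real) (as::nat list).
           n \<ge> N \<and> c \<ge> c0 \<and> length as = k \<and>
           (\<forall>j<k. \<bar>real (as ! j) - real n * (1 - p)\<bar> \<le> C * sqrt (real n * ln (real n)))
           \<longrightarrow> del_prob p (blocks (map (\<lambda>xi. n + xi) x)) (blocks as)
                 / del_prob p (blocks (map (\<lambda>yi. n + yi) y)) (blocks as)
               \<in> {1 - (c * ln (real n) / real n) powr ((real z + 1) / 2) ..
                  1 + (c * ln (real n) / real n) powr ((real z + 1) / 2)}"
proof -
  obtain N M where NM: "\<forall>n as. N \<le> n \<and> length as = k
      \<and> (\<forall>j<k. \<bar>real (as ! j) - real n * (1 - p)\<bar> \<le> C * sqrt (real n * ln (real n)))
      \<longrightarrow> \<bar>del_ratio p x y n as - 1\<bar> \<le> M * (ln (real n) / real n) powr ((real z + 1) / 2)"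
    using del_ratio_asymptotic[OF assms(1-3,9,5,6,8)] by blast
  have "del_ratio p x y n as \<in> {1 - (c * ln (real n) / real n) powr ((real z + 1) / 2) ..
      1 + (c * ln (real n) / real n) powr ((real z + 1) / 2)}"
    if A: "N \<le> n" "max 1 M \<le> c" "length as = k"
      "\<forall>j<k. \<bar>real (as ! j) - real n * (1 - p)\<bar> \<le> C * sqrt (real n * ln (real n))" for n c as
  proof -
    have "0 \<le> ln (real n) / real n"
      by (cases n) auto
    have "\<bar>del_ratio p x y n as - 1\<bar> \<le> M * (ln (real n) / real n) powr ((real z + 1) / 2)"
      using NM A(1,3,4) by blast
    also have "\<dots> \<le> c * (ln (real n) / real n) powr ((real z + 1) / 2)"
      using A(2) by (intro mult_right_mono) auto
    also have "\<dots> \<le> (c * (ln (real n) / real n)) powr ((real z + 1) / 2)"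
      using A(2) assms(4) \<open>0 \<le> ln (real n) / real n\<close> by (intro mult_powr_le_powr_mult) auto
    finally show ?thesis
      by (simp add: abs_le_iff)
  qed
  then show ?thesis
    unfolding del_ratio_def[symmetric] by (intro exI[of _ N] exI[of _ "max 1 M"]) blast
qed

end
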